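(* Let $Q=(M,\Omega)$ be a $2$-sheltering matroid on ground set $U$ such that the multimatroid $\mathcal Z(Q)$ is tight, and suppose $M$ is representable over a field $\mathbb F$. Then $r(M)=|\Omega|$ (so $Q$ is strict). Moreover, if $B$ is a basis of $M$ that is a transversal of $\Omega$ and $T=U\setminus B$ (a transversal), then for every standard $\mathbb F$-representation $(I\mid A)$ of $M$ with respect to $B$ (identity columns indexed by $B$, columns of $A$ indexed by $T$), the matrix $A$ is zero-diagonal, i.e. $A_{b,t}=0$ whenever $\{b,t\}\in\Omega$. If $\mathbb F=GF(2)$, then $A$ is in addition symmetric, i.e. $A_{b,t}=A_{b',t'}$ whenever $\{b,t'\},\{b',t\}\in\Omega$.
   Context: Let $\Omega$ be a partition of a finite set $U$; a subtransversal (transversal) meets every class in at most (exactly) one element. A sheltering matroid is a pair $Q=(M,\Omega)$ with $M$ a matroid on $U$ such that for every independent subtransversal $I$ of $M$ and every $2$-element subset $\{x,y\}$ of a class $\omega$ with $\omega\cap I=\emptyset$, $I\cup\{x\}$ or $I\cup\{y\}$ is independent in $M$; it is a $2$-sheltering matroid if all classes have size $2$, and strict if $r(M)\le|\Omega|$. $\mathcal Z(Q)$ is the multimatroid on $(U,\Omega)$ whose independent sets are the independent subtransversals of $M$. $\mathcal Z(Q)$ is tight if every class has size $>1$ and for every subtransversal $S$ with $|S|=|\Omega|-1$, letting $\omega$ be the class disjoint from $S$, there is $x\in\omega$ with $r_M(S\cup\{x\})=r_M(S)$. *)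

theory Defs
  imports Main "HOL-Library.Disjoint_Sets"
begin

definition matroid :: "'a set \<Rightarrow> ('a set \<Rightarrow> bool) \<Rightarrow> bool" where
  "matroid U indep \<longleftrightarrow> finite U \<and> indep {} \<and>
     (\<forall>X. indep X \<longrightarrow> X \<subseteq> U) \<and>
     (\<forall>X Y. indep Y \<and> X \<subseteq> Y \<longrightarrow> indep X) \<and>
     (\<forall>X Y. indep X \<and> indep Y \<and> card X < card Y \<longrightarrow>
        (\<exists>y\<in>Y - X. indep (insert y X)))"

definition mrank :: "('a set \<Rightarrow> bool) \<Rightarrow> 'a set \<Rightarrow> nat" where
  "mrank indep X = Max (card ` {I. I \<subseteq> X \<and> indep I})"

definition mbasis :: "'a set \<Rightarrow> ('a set \<Rightarrow> bool) \<Rightarrow> 'a set \<Rightarrow> bool" where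
  "mbasis U indep B \<longleftrightarrow> indep B \<and> (\<forall>X. indep X \<and> B \<subseteq> X \<longrightarrow> X = B)"

definition subtransversal :: "'a set set \<Rightarrow> 'a set \<Rightarrow> bool" where
  "subtransversal \<Omega> S \<longleftrightarrow> S \<subseteq> \<Union>\<Omega> \<and> (\<forall>\<omega>\<in>\<Omega>. card (S \<inter> \<omega>) \<le> 1)"

definition transversal :: "'a set set \<Rightarrow> 'a set \<Rightarrow> bool" where
  "transversal \<Omega> S \<longleftrightarrow> S \<subseteq> \<Union>\<Omega> \<and> (\<forall>\<omega>\<in>\<Omega>. card (S \<inter> \<omega>) = 1)"

definition sheltering :: "'a set \<Rightarrow> ('a set \<Rightarrow> bool) \<Rightarrow> 'a set set \<Rightarrow> bool" where
  "sheltering U indep \<Omega> \<longleftrightarrow> matroid U indep \<and> partition_on U \<Omega> \<and>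
     (\<forall>I \<omega> x y. indep I \<and> subtransversal \<Omega> I \<and> \<omega> \<in> \<Omega> \<and> \<omega> \<inter> I = {} \<and>
        x \<in> \<omega> \<and> y \<in> \<omega> \<and> x \<noteq> y \<longrightarrow> indep (insert x I) \<or> indep (insert y I))"

definition two_sheltering :: "'a set \<Rightarrow> ('a set \<Rightarrow> bool) \<Rightarrow> 'a set set \<Rightarrow> bool" where
  "two_sheltering U indep \<Omega> \<longleftrightarrow> sheltering U indep \<Omega> \<and> (\<forall>\<omega>\<in>\<Omega>. card \<omega> = 2)"

definition strict_sheltering :: "'a set \<Rightarrow> ('a set \<Rightarrow> bool) \<Rightarrow> 'a set set \<Rightarrow> bool" where
  "strict_sheltering U indep \<Omega> \<longleftrightarrow> sheltering U indep \<Omega> \<and> mrank indep U \<le> card \<Omega>"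

text \<open>Tightness of the multimatroid Z(Q): its rank function on subtransversals is that of M.\<close>
definition Z_tight :: "'a set \<Rightarrow> ('a set \<Rightarrow> bool) \<Rightarrow> 'a set set \<Rightarrow> bool" where
  "Z_tight U indep \<Omega> \<longleftrightarrow> (\<forall>\<omega>\<in>\<Omega>. card \<omega> > 1) \<and>
     (\<forall>S \<omega>. subtransversal \<Omega> S \<and> card S = card \<Omega> - 1 \<and> \<omega> \<in> \<Omega> \<and> \<omega> \<inter> S = {} \<longrightarrow>
        (\<exists>x\<in>\<omega>. mrank indep (insert x S) = mrank indep S))"

definition cols_indep :: "'r set \<Rightarrow> ('r \<Rightarrow> 'a \<Rightarrow> 'f::field) \<Rightarrow> 'a set \<Rightarrow> bool" where
  "cols_indep R D X \<longleftrightarrow> finite X \<and>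
     (\<forall>c. (\<forall>r\<in>R. (\<Sum>x\<in>X. c x * D r x) = 0) \<longrightarrow> (\<forall>x\<in>X. c x = 0))"

definition represents :: "'r set \<Rightarrow> ('r \<Rightarrow> 'a \<Rightarrow> 'f::field) \<Rightarrow> 'a set \<Rightarrow> ('a set \<Rightarrow> bool) \<Rightarrow> bool" where
  "represents R D U indep \<longleftrightarrow> finite R \<and> (\<forall>X\<subseteq>U. indep X \<longleftrightarrow> cols_indep R D X)"

definition representable_over :: "'f::field itself \<Rightarrow> 'a set \<Rightarrow> ('a set \<Rightarrow> bool) \<Rightarrow> bool" where
  "representable_over F U indep \<longleftrightarrow>
     (\<exists>m (D :: nat \<Rightarrow> 'a \<Rightarrow> 'f). represents {..<m} D U indep)"

text \<open>The matrix (I | A) with rows indexed by B and columns indexed by U: identity on B,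
  columns of A on U - B.\<close>
definition std_matrix :: "'a set \<Rightarrow> ('a \<Rightarrow> 'a \<Rightarrow> 'f::field) \<Rightarrow> 'a \<Rightarrow> 'a \<Rightarrow> 'f" where
  "std_matrix B A b u = (if u \<in> B then (if u = b then 1 else 0) else A b u)"

end

theory Submission
  imports Defs
begin

text \<open>
  Tightness says: removing an element t from a transversal I, the rank of I - t does not grow
  under at least one of the two ways of refilling the class {t, u} of t. If I is independent,
  refilling with t raises the rank, so I - t + u must be dependent. This forbids an independent
  set larger than a transversal, giving r(M) = |\<Omega>|; and in a standard representation
  (I | A) it says exactly that B - b + t is dependent for {b, t} \<in> \<Omega>, i.e. A b t = 0.
  Applied to the transversal B - b + t', it also shows that A b t \<noteq> 0 forces A b' t' \<noteq> 0
  for {b, t'}, {b', t} \<in> \<Omega>; over GF(2) a nonzero entry is 1, whence symmetry.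
\<close>

subsection \<open>Rank\<close>

lemma mrank_ge:
  assumes "finite Y" "I \<subseteq> Y" "indep I"
  shows "card I \<le> mrank indep Y"
  unfolding mrank_def
proof (rule Max_ge)
  have "{I. I \<subseteq> Y \<and> indep I} \<subseteq> Pow Y" by auto
  then show "finite (card ` {I. I \<subseteq> Y \<and> indep I})"
    using assms(1) finite_subset by blast
  show "card I \<in> card ` {I. I \<subseteq> Y \<and> indep I}" using assms by auto
qed

lemma mrank_le:
  assumes "finite Y" "indep {}" "\<And>I. I \<subseteq> Y \<Longrightarrow> indep I \<Longrightarrow> card I \<le> k"
  shows "mrank indep Y \<le> k"
  unfolding mrank_def
proof (rule Max.boundedI)
  have "{I. I \<subseteq> Y \<and> indep I} \<subseteq> Pow Y" by auto
  then show "finite (card ` {I. I \<subseteq> Y \<and> indep I})"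
    using assms(1) finite_subset by blast
  show "card ` {I. I \<subseteq> Y \<and> indep I} \<noteq> {}" using assms(2) by auto
  show "\<And>a. a \<in> card ` {I. I \<subseteq> Y \<and> indep I} \<Longrightarrow> a \<le> k" using assms(3) by auto
qed

lemma mrank_indep:
  assumes "finite X" "indep X" "indep {}"
  shows "mrank indep X = card X"
proof (rule antisym)
  show "mrank indep X \<le> card X"
    by (rule mrank_le[OF assms(1)]) (use assms in \<open>auto intro: card_mono\<close>)
  show "card X \<le> mrank indep X" by (rule mrank_ge) (use assms in auto)
qed

lemma mrank_less_card_if_dependent:
  assumes "finite Y" "indep {}" "\<not> indep Y"
  shows "mrank indep Y < card Y"
proof -
  have "card Y > 0" using assms by (auto simp: card_gt_0_iff)
  have "mrank indep Y \<le> card Y - 1"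
  proof (rule mrank_le[where indep = indep, OF assms(1,2)])
    fix I assume "I \<subseteq> Y" "indep I"
    then have "I \<subset> Y" using assms(3) by auto
    then have "card I < card Y" using assms(1) psubset_card_mono by blast
    then show "card I \<le> card Y - 1" by simp
  qed
  then show ?thesis using \<open>card Y > 0\<close> by simp
qed

lemma matroid_indep_subset: "matroid U indep \<Longrightarrow> indep X \<Longrightarrow> X \<subseteq> U"
  unfolding matroid_def by blast

lemma matroid_indep_finite:
  assumes "matroid U indep" "indep X"
  shows "finite X"
proof (rule finite_subset)
  show "X \<subseteq> U" using assms by (rule matroid_indep_subset)
  show "finite U" using assms(1) by (simp add: matroid_def)
qed

lemma matroid_indep_mono: "matroid U indep \<Longrightarrow> indep Y \<Longrightarrow> X \<subseteq> Y \<Longrightarrow> indep X"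
  unfolding matroid_def by blast

lemma matroid_mrank_indep:
  assumes "matroid U indep" "indep X"
  shows "mrank indep X = card X"
  using mrank_indep[where indep = indep, OF matroid_indep_finite[OF assms] assms(2)] assms(1)
  by (simp add: matroid_def)

subsection \<open>Standard representations\<close>

lemma sum_std_matrix_insert:
  fixes A :: "'a \<Rightarrow> 'a \<Rightarrow> 'f::field"
  assumes "finite K" "K \<subseteq> B" "t \<notin> B"
  shows "(\<Sum>x\<in>insert t K. c x * std_matrix B A r x) = c t * A r t + (if r \<in> K then c r else 0)"
proof -
  have "(\<Sum>x\<in>K. c x * std_matrix B A r x) = (\<Sum>x\<in>K. if x = r then c x else 0)"
    by (rule sum.cong) (use assms in \<open>auto simp: std_matrix_def\<close>)
  also have "\<dots> = (if r \<in> K then c r else 0)" using assms(1) by simp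
  moreover have "t \<notin> K" using assms(2,3) by blast
  ultimately show ?thesis using assms by (simp add: std_matrix_def)
qed

lemma cols_indep_std_matrix_insert_iff:
  fixes A :: "'a \<Rightarrow> 'a \<Rightarrow> 'f::field"
  assumes "finite B" "K \<subseteq> B" "t \<notin> B"
  shows "cols_indep B (std_matrix B A) (insert t K) \<longleftrightarrow> (\<exists>b\<in>B - K. A b t \<noteq> 0)"
proof
  have fK: "finite K" using assms finite_subset by blast
  note row = sum_std_matrix_insert[OF fK assms(2,3)]
  show "\<exists>b\<in>B - K. A b t \<noteq> 0" if ci: "cols_indep B (std_matrix B A) (insert t K)"
  proof (rule ccontr)
    assume column_in_span: "\<not> (\<exists>b\<in>B - K. A b t \<noteq> 0)"
    define c where "c x = (if x = t then 1 else - A x t)" for x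
    have "(\<Sum>x\<in>insert t K. c x * std_matrix B A r x) = 0" if "r \<in> B" for r
      using row[of c A r] that column_in_span assms(2,3) by (auto simp: c_def)
    then have "c t = 0" using ci unfolding cols_indep_def by blast
    then show False by (simp add: c_def)
  qed
  show "cols_indep B (std_matrix B A) (insert t K)" if witness: "\<exists>b\<in>B - K. A b t \<noteq> 0"
    unfolding cols_indep_def
  proof (intro conjI allI impI ballI)
    show "finite (insert t K)" using fK by simp
    obtain b where b: "b \<in> B" "b \<notin> K" "A b t \<noteq> 0" using witness by blast
    fix c x
    assume H: "\<forall>r\<in>B. (\<Sum>x\<in>insert t K. c x * std_matrix B A r x) = 0" and x: "x \<in> insert t K"
    have "c t = 0" using H row[of c A b] b by simp
    then show "c x = 0" using x H row[of c A x] assms(2) by auto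
  qed
qed

subsection \<open>Transversals\<close>

lemma transversal_card:
  assumes "partition_on U \<Omega>" "finite U" "transversal \<Omega> I"
  shows "card I = card \<Omega>"
proof -
  have fO: "finite \<Omega>" using assms(1,2) partition_onD1 finite_UnionD by metis
  have IU: "I \<subseteq> \<Union>\<Omega>" and c1: "\<forall>\<omega>\<in>\<Omega>. card (I \<inter> \<omega>) = 1"
    using assms(3) by (auto simp: transversal_def)
  have "I = (\<Union>\<omega>\<in>\<Omega>. I \<inter> \<omega>)" using IU by auto
  moreover have "card (\<Union>\<omega>\<in>\<Omega>. I \<inter> \<omega>) = (\<Sum>\<omega>\<in>\<Omega>. card (I \<inter> \<omega>))"
  proof (rule card_UN_disjoint[OF fO])
    show "\<forall>\<omega>\<in>\<Omega>. finite (I \<inter> \<omega>)" using c1 by (metis card.infinite zero_neq_one)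
    show "\<forall>i\<in>\<Omega>. \<forall>j\<in>\<Omega>. i \<noteq> j \<longrightarrow> I \<inter> i \<inter> (I \<inter> j) = {}"
      using disjointD[OF partition_onD2[OF assms(1)]] by blast
  qed
  ultimately show ?thesis using c1 by simp
qed

lemma partition_on_class_eq:
  "partition_on U \<Omega> \<Longrightarrow> \<omega> \<in> \<Omega> \<Longrightarrow> \<omega>' \<in> \<Omega> \<Longrightarrow> x \<in> \<omega> \<Longrightarrow> x \<in> \<omega>' \<Longrightarrow> \<omega> = \<omega>'"
  by (metis disjointD[OF partition_onD2] disjoint_iff)

lemma transversal_inter_class:
  assumes "transversal \<Omega> I" "\<omega> \<in> \<Omega>" "t \<in> I" "t \<in> \<omega>"
  shows "I \<inter> \<omega> = {t}"
proof -
  have "card (I \<inter> \<omega>) = 1" using assms(1,2) by (simp add: transversal_def)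
  then obtain z where "I \<inter> \<omega> = {z}" by (auto simp: card_1_singleton_iff)
  moreover have "t \<in> I \<inter> \<omega>" using assms(3,4) by blast
  ultimately show ?thesis by auto
qed

lemma transversal_subset: "partition_on U \<Omega> \<Longrightarrow> transversal \<Omega> I \<Longrightarrow> I \<subseteq> U"
  by (auto simp: transversal_def dest: partition_onD1)

lemma transversal_exchange:
  assumes "partition_on U \<Omega>" "transversal \<Omega> I" "{t, u} \<in> \<Omega>" "t \<in> I"
  shows "transversal \<Omega> (insert u (I - {t}))"
  unfolding transversal_def
proof (intro conjI ballI)
  show "insert u (I - {t}) \<subseteq> \<Union>\<Omega>" using assms(2,3) by (auto simp: transversal_def)
  fix \<omega> assume \<omega>: "\<omega> \<in> \<Omega>"
  show "card (insert u (I - {t}) \<inter> \<omega>) = 1"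
  proof (cases "\<omega> = {t, u}")
    case True
    then have "insert u (I - {t}) \<inter> \<omega> = {u}"
      using transversal_inter_class[OF assms(2) \<omega> assms(4)] by auto
    then show ?thesis by simp
  next
    case False
    then have "t \<notin> \<omega>" "u \<notin> \<omega>" using partition_on_class_eq[OF assms(1) \<omega> assms(3)] by auto
    then have "insert u (I - {t}) \<inter> \<omega> = I \<inter> \<omega>" by auto
    then show ?thesis using assms(2) \<omega> by (simp add: transversal_def)
  qed
qed

lemma subtransversal_remove:
  assumes "transversal \<Omega> I" "finite I"
  shows "subtransversal \<Omega> (I - {t})"
  unfolding subtransversal_def
proof (intro conjI ballI)
  show "I - {t} \<subseteq> \<Union>\<Omega>" using assms(1) by (auto simp: transversal_def)
  fix \<omega> assume "\<omega> \<in> \<Omega>"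
  then have "card (I \<inter> \<omega>) = 1" using assms(1) by (simp add: transversal_def)
  moreover have "card ((I - {t}) \<inter> \<omega>) \<le> card (I \<inter> \<omega>)"
    by (rule card_mono) (use assms(2) in auto)
  ultimately show "card ((I - {t}) \<inter> \<omega>) \<le> 1" by simp
qed

subsection \<open>Tight sheltering matroids\<close>

lemma Z_tight_class_rank:
  assumes "Z_tight U indep \<Omega>" "partition_on U \<Omega>" "finite U"
    and "transversal \<Omega> I" "t \<in> I" "{t, u} \<in> \<Omega>"
  shows "mrank indep I = mrank indep (I - {t}) \<or>
    mrank indep (insert u (I - {t})) = mrank indep (I - {t})"
proof -
  have fI: "finite I" using transversal_subset[OF assms(2,4)] assms(3) finite_subset by blast
  have "card (I - {t}) = card \<Omega> - 1"
    using transversal_card[OF assms(2-4)] assms(5) fI by simp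
  moreover have "{t, u} \<inter> (I - {t}) = {}"
    using transversal_inter_class[OF assms(4,6,5)] by auto
  ultimately obtain x where "x \<in> {t, u}" "mrank indep (insert x (I - {t})) = mrank indep (I - {t})"
    using assms(1,6) subtransversal_remove[OF assms(4) fI] unfolding Z_tight_def by blast
  moreover have "insert t (I - {t}) = I" using assms(5) by blast
  ultimately show ?thesis by auto
qed

lemma Z_tight_swap_dependent:
  assumes "matroid U indep" "partition_on U \<Omega>" "Z_tight U indep \<Omega>"
    and "indep I" "transversal \<Omega> I" "t \<in> I" "{t, u} \<in> \<Omega>"
  shows "\<not> indep (insert u (I - {t}))"
proof
  assume indep_swap: "indep (insert u (I - {t}))"
  have fI: "finite I" and fU: "finite U"
    using assms(1,4) matroid_indep_finite by (auto simp: matroid_def)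
  have "1 < card {t, u}" using assms(3,7) by (simp add: Z_tight_def)
  then have "t \<noteq> u" by auto
  then have "u \<notin> I" using transversal_inter_class[OF assms(5,7,6)] by auto
  have "card I > 0" using fI assms(6) by (auto simp: card_gt_0_iff)
  have "mrank indep (insert u (I - {t})) = card I"
    using matroid_mrank_indep[OF assms(1) indep_swap] \<open>u \<notin> I\<close> \<open>card I > 0\<close> assms(6) fI
    by simp
  moreover have "mrank indep (I - {t}) = card I - 1"
    using matroid_mrank_indep[OF assms(1) matroid_indep_mono[OF assms(1,4)]] fI assms(6) by auto
  ultimately show False
    using \<open>card I > 0\<close> Z_tight_class_rank[OF assms(3,2) fU assms(5-7)]
      matroid_mrank_indep[OF assms(1,4)]
    by auto
qed

text \<open>A maximal independent subtransversal meets every class, by the sheltering property.\<close>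
lemma sheltering_ex_indep_transversal:
  assumes "sheltering U indep \<Omega>" "\<forall>\<omega>\<in>\<Omega>. 1 < card \<omega>"
  obtains I where "indep I" "transversal \<Omega> I"
proof -
  have mat: "matroid U indep" and part: "partition_on U \<Omega>"
    and shelter: "\<And>I \<omega> x y. indep I \<Longrightarrow> subtransversal \<Omega> I \<Longrightarrow> \<omega> \<in> \<Omega> \<Longrightarrow> \<omega> \<inter> I = {} \<Longrightarrow>
        x \<in> \<omega> \<Longrightarrow> y \<in> \<omega> \<Longrightarrow> x \<noteq> y \<Longrightarrow> indep (insert x I) \<or> indep (insert y I)"
    using assms(1) unfolding sheltering_def by blast+
  let ?C = "{I. indep I \<and> subtransversal \<Omega> I}"
  have fC: "finite (card ` ?C)"
  proof -
    have "?C \<subseteq> Pow U" using matroid_indep_subset[OF mat] by auto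
    moreover have "finite U" using mat by (simp add: matroid_def)
    ultimately show ?thesis by (meson finite_Pow_iff finite_imageI finite_subset)
  qed
  have "{} \<in> ?C" using mat by (auto simp: matroid_def subtransversal_def)
  then have "Max (card ` ?C) \<in> card ` ?C" using fC Max_in by blast
  then obtain I where I: "indep I" "subtransversal \<Omega> I" "card I = Max (card ` ?C)" by auto
  have "I \<inter> \<omega> \<noteq> {}" if \<omega>: "\<omega> \<in> \<Omega>" for \<omega>
  proof
    assume disj: "I \<inter> \<omega> = {}"
    have "finite \<omega>" "\<not> card \<omega> \<le> Suc 0" using assms(2) \<omega> card.infinite by fastforce+
    then obtain x y where "x \<in> \<omega>" "y \<in> \<omega>" "x \<noteq> y" using card_le_Suc0_iff_eq by blast
    then obtain z where z: "z \<in> \<omega>" "indep (insert z I)"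
      using shelter[OF I(1,2) \<omega>] disj by blast
    have "subtransversal \<Omega> (insert z I)"
      unfolding subtransversal_def
    proof (intro conjI ballI)
      show "insert z I \<subseteq> \<Union>\<Omega>" using I z \<omega> by (auto simp: subtransversal_def)
      fix \<omega>' assume \<omega>': "\<omega>' \<in> \<Omega>"
      show "card (insert z I \<inter> \<omega>') \<le> 1"
      proof (cases "\<omega>' = \<omega>")
        case True then show ?thesis using disj z by simp
      next
        case False
        then have "z \<notin> \<omega>'" using partition_on_class_eq[OF part \<omega> \<omega>'] z by blast
        then show ?thesis using I \<omega>' by (auto simp: subtransversal_def)
      qed
    qed
    then have "card (insert z I) \<le> card I" using I z fC by simp
    moreover have "z \<notin> I" using z disj by auto
    ultimately show False using matroid_indep_finite[OF mat I(1)] by simp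
  qed
  moreover have "card (I \<inter> \<omega>) \<le> 1" if "\<omega> \<in> \<Omega>" for \<omega>
    using I(2) that by (simp add: subtransversal_def)
  moreover have "card (I \<inter> \<omega>) \<noteq> 0" if "I \<inter> \<omega> \<noteq> {}" for \<omega>
    using that matroid_indep_finite[OF mat I(1)] by simp
  ultimately have "card (I \<inter> \<omega>) = 1" if "\<omega> \<in> \<Omega>" for \<omega>
    using that by (meson le_antisym less_one not_le)
  then have "transversal \<Omega> I" using I(2) by (simp add: subtransversal_def transversal_def)
  then show ?thesis using that I by blast
qed

lemma two_sheltering_class_eq:
  assumes "two_sheltering U indep \<Omega>" "\<omega> \<in> \<Omega>" "t \<in> \<omega>" "y \<in> \<omega>" "t \<noteq> y"
  shows "\<omega> = {t, y}"
proof -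
  have "card \<omega> = 2" using assms(1,2) by (simp add: two_sheltering_def)
  then have "finite \<omega>" "card {t, y} = card \<omega>" using assms(5) card.infinite by fastforce+
  then show ?thesis using card_subset_eq[of \<omega> "{t, y}"] assms(3,4) by blast
qed

text \<open>An independent set larger than an independent transversal I would extend I by some y;
  exchanging y against the element of I in its class contradicts tightness.\<close>
lemma two_sheltering_tight_indep_card_le:
  assumes "two_sheltering U indep \<Omega>" "Z_tight U indep \<Omega>" "indep J"
  shows "card J \<le> card \<Omega>"
proof (rule ccontr)
  assume "\<not> card J \<le> card \<Omega>"
  have sh: "sheltering U indep \<Omega>" using assms(1) by (simp add: two_sheltering_def)
  then have mat: "matroid U indep" and part: "partition_on U \<Omega>" by (auto simp: sheltering_def)
  obtain I where I: "indep I" "transversal \<Omega> I"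
    using sheltering_ex_indep_transversal[OF sh] assms(2) by (auto simp: Z_tight_def)
  have "card I < card J"
    using transversal_card[OF part _ I(2)] mat \<open>\<not> card J \<le> card \<Omega>\<close> by (simp add: matroid_def)
  then obtain y where y: "y \<in> J - I" "indep (insert y I)"
    using mat I(1) assms(3) unfolding matroid_def by blast
  have "y \<in> U" using y(1) matroid_indep_subset[OF mat assms(3)] by blast
  then obtain \<omega> where \<omega>: "\<omega> \<in> \<Omega>" "y \<in> \<omega>" using partition_onD1[OF part] by blast
  then have "card (I \<inter> \<omega>) = 1" using I(2) by (simp add: transversal_def)
  then obtain t where "I \<inter> \<omega> = {t}" by (auto simp: card_1_singleton_iff)
  then have t: "t \<in> I" "t \<in> \<omega>" by blast+
  then have "\<omega> = {t, y}" using two_sheltering_class_eq[OF assms(1) \<omega>(1) t(2) \<omega>(2)] y(1) by blast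
  then have "\<not> indep (insert y (I - {t}))"
    using Z_tight_swap_dependent[OF mat part assms(2) I t(1)] \<omega>(1) by blast
  moreover have "insert y (I - {t}) \<subseteq> insert y I" by blast
  ultimately show False using matroid_indep_mono[OF mat y(2)] by blast
qed

lemma two_sheltering_tight_mrank:
  assumes "two_sheltering U indep \<Omega>" "Z_tight U indep \<Omega>"
  shows "mrank indep U = card \<Omega>"
proof -
  have sh: "sheltering U indep \<Omega>" using assms(1) by (simp add: two_sheltering_def)
  then have mat: "matroid U indep" and part: "partition_on U \<Omega>" by (auto simp: sheltering_def)
  then have fU: "finite U" and "indep {}" by (auto simp: matroid_def)
  obtain I where I: "indep I" "transversal \<Omega> I"
    using sheltering_ex_indep_transversal[OF sh] assms(2) by (auto simp: Z_tight_def)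
  show ?thesis
  proof (rule antisym)
    show "mrank indep U \<le> card \<Omega>"
      using mrank_le[where indep = indep, OF fU \<open>indep {}\<close>] two_sheltering_tight_indep_card_le[OF assms] by blast
    show "card \<Omega> \<le> mrank indep U"
      using mrank_ge[where indep = indep, OF fU matroid_indep_subset[OF mat I(1)] I(1)] transversal_card[OF part fU I(2)]
      by simp
  qed
qed

lemma Z_tight_std_matrix_zero_diagonal:
  fixes A :: "'a \<Rightarrow> 'a \<Rightarrow> 'f::field"
  assumes "matroid U indep" "partition_on U \<Omega>" "Z_tight U indep \<Omega>"
    and "indep B" "transversal \<Omega> B" "represents B (std_matrix B A) U indep"
    and "b \<in> B" "t \<in> U - B" "{b, t} \<in> \<Omega>"
  shows "A b t = 0"
proof (rule ccontr)
  assume "A b t \<noteq> 0"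
  have "finite B" using matroid_indep_finite[OF assms(1,4)] .
  then have "cols_indep B (std_matrix B A) (insert t (B - {b}))"
    using cols_indep_std_matrix_insert_iff[of B "B - {b}" t A] assms(7,8) \<open>A b t \<noteq> 0\<close> by blast
  moreover have "insert t (B - {b}) \<subseteq> U"
    using assms(8) matroid_indep_subset[OF assms(1,4)] by blast
  ultimately have "indep (insert t (B - {b}))" using assms(6) by (simp add: represents_def)
  then show False using Z_tight_swap_dependent[OF assms(1-5,7,9)] by blast
qed

text \<open>With S = B - {b, b'} + t', the transversal S + b' and the set S + t both contain an
  independent set of size |S|. If A b' t' = 0, then column t' vanishes on rows b and b' as well,
  so S is dependent, and tightness applied to the class {b', t} fails.\<close>
lemma Z_tight_std_matrix_nonzero_transfer:
  fixes A :: "'a \<Rightarrow> 'a \<Rightarrow> 'f::field"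
  assumes "matroid U indep" "partition_on U \<Omega>" "Z_tight U indep \<Omega>"
    and "indep B" "transversal \<Omega> B" "represents B (std_matrix B A) U indep"
    and "b \<in> B" "b' \<in> B" "t \<in> U - B" "t' \<in> U - B" "{b, t'} \<in> \<Omega>" "{b', t} \<in> \<Omega>"
    and "A b t \<noteq> 0"
  shows "A b' t' \<noteq> 0"
proof (cases "b = b'")
  case True
  then have "t' \<in> {b, t}" using partition_on_class_eq[OF assms(2,11,12)] by blast
  moreover have "t' \<noteq> b" using assms(7,10) by blast
  ultimately show ?thesis using True assms(13) by simp
next
  case False
  show ?thesis
  proof
    assume "A b' t' = 0"
    have fU: "finite U" and fB: "finite B" and BU: "B \<subseteq> U"
      using assms(1,4) matroid_indep_finite matroid_indep_subset by (auto simp: matroid_def)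
    have rep: "indep X \<longleftrightarrow> cols_indep B (std_matrix B A) X" if "X \<subseteq> U" for X
      using assms(6) that by (simp add: represents_def)
    define K where "K = B - {b, b'}"
    define S where "S = insert t' K"
    have fS: "finite S" and SU: "S \<subseteq> U" and t'K: "t' \<notin> K" and tK: "t \<notin> K"
      using fB BU assms(9,10) by (auto simp: S_def K_def)
    have "A b t' = 0" by (rule Z_tight_std_matrix_zero_diagonal[OF assms(1-7,10,11)])
    then have "\<not> (\<exists>r\<in>B - K. A r t' \<noteq> 0)" using \<open>A b' t' = 0\<close> by (auto simp: K_def)
    then have "\<not> indep S"
      using cols_indep_std_matrix_insert_iff[OF fB _ , of K t' A] rep[OF SU] assms(10)
      by (simp add: S_def K_def)
    then have "mrank indep S < card S"
      using mrank_less_card_if_dependent[OF fS] assms(1) by (simp add: matroid_def)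
    moreover have card_S: "card S = card (B - {b})"
    proof -
      have "2 \<le> card B" using card_mono[OF fB, of "{b, b'}"] assms(7,8) False by simp
      then show ?thesis using assms(7,8) False fB t'K by (simp add: S_def K_def card_Diff_subset)
    qed
    moreover have "card (B - {b}) \<le> mrank indep (insert b' S)"
    proof (rule mrank_ge)
      show "finite (insert b' S)" using fS by simp
      show "B - {b} \<subseteq> insert b' S" by (auto simp: S_def K_def)
      show "indep (B - {b})" using matroid_indep_mono[OF assms(1,4)] by blast
    qed
    moreover have "card (B - {b}) \<le> mrank indep (insert t S)"
    proof -
      have "\<exists>r\<in>B - K. A r t \<noteq> 0" using assms(7,13) by (auto simp: K_def)
      then have "indep (insert t K)"
        using cols_indep_std_matrix_insert_iff[OF fB _, of K t A] rep[of "insert t K"] assms(9) BU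
        by (auto simp: K_def)
      moreover have "card (insert t K) = card S" using fB t'K tK by (simp add: S_def K_def)
      moreover have "insert t K \<subseteq> insert t S" by (auto simp: S_def)
      ultimately show ?thesis using mrank_ge[of "insert t S" "insert t K" indep] fS card_S by simp
    qed
    moreover have "transversal \<Omega> (insert b' S)"
    proof -
      have "insert b' S = insert t' (B - {b})" using assms(8) False by (auto simp: S_def K_def)
      then show ?thesis using transversal_exchange[OF assms(2,5,11,7)] by simp
    qed
    moreover have "insert b' S - {b'} = S" using assms(8,10) by (auto simp: S_def K_def)
    ultimately show False
      using Z_tight_class_rank[OF assms(3,2) fU _ insertI1 assms(12), of S] by auto
  qed
qed

lemma card_UNIV_two_nonzero_eq_one:
  fixes x :: "'f::field"
  assumes "card (UNIV :: 'f set) = 2" "x \<noteq> 0"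
  shows "x = 1"
proof -
  have "finite (UNIV :: 'f set)" using assms(1) card.infinite by fastforce
  moreover have "card {0 :: 'f, 1} = card (UNIV :: 'f set)" using assms(1) by simp
  ultimately have "{0 :: 'f, 1} = UNIV" by (metis card_subset_eq subset_UNIV)
  then show ?thesis using assms(2) by auto
qed

theorem proposition2p7:
  fixes U :: "'a set" and indep :: "'a set \<Rightarrow> bool" and \<Omega> :: "'a set set"
  assumes "two_sheltering U indep \<Omega>"
    and "Z_tight U indep \<Omega>"
    and "representable_over TYPE('f::field) U indep"
  shows "mrank indep U = card \<Omega> \<and>
    (\<forall>B (A :: 'a \<Rightarrow> 'a \<Rightarrow> 'f). mbasis U indep B \<and> transversal \<Omega> B \<and>
        represents B (std_matrix B A) U indep \<longrightarrow>
      (\<forall>b\<in>B. \<forall>t\<in>U - B. {b, t} \<in> \<Omega> \<longrightarrow> A b t = 0) \<and>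
      (card (UNIV :: 'f set) = 2 \<longrightarrow>
        (\<forall>b\<in>B. \<forall>b'\<in>B. \<forall>t\<in>U - B. \<forall>t'\<in>U - B.
           {b, t'} \<in> \<Omega> \<and> {b', t} \<in> \<Omega> \<longrightarrow> A b t = A b' t')))"
proof (intro conjI allI impI ballI)
  show "mrank indep U = card \<Omega>" using two_sheltering_tight_mrank[OF assms(1,2)] .
  have mat: "matroid U indep" and part: "partition_on U \<Omega>"
    using assms(1) by (auto simp: two_sheltering_def sheltering_def)
  fix B and A :: "'a \<Rightarrow> 'a \<Rightarrow> 'f"
  assume "mbasis U indep B \<and> transversal \<Omega> B \<and> represents B (std_matrix B A) U indep"
  then have B: "indep B" "transversal \<Omega> B" "represents B (std_matrix B A) U indep"
    by (auto simp: mbasis_def)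
  note setting = mat part assms(2) B
  show "A b t = 0" if "b \<in> B" "t \<in> U - B" "{b, t} \<in> \<Omega>" for b t
    using Z_tight_std_matrix_zero_diagonal[OF setting that] .
  fix b b' t t'
  assume "card (UNIV :: 'f set) = 2" and bt: "b \<in> B" "b' \<in> B" "t \<in> U - B" "t' \<in> U - B"
    and "{b, t'} \<in> \<Omega> \<and> {b', t} \<in> \<Omega>"
  then have "A b t \<noteq> 0 \<longleftrightarrow> A b' t' \<noteq> 0"
    using Z_tight_std_matrix_nonzero_transfer[OF setting] by meson
  moreover note card_UNIV_two_nonzero_eq_one[OF \<open>card (UNIV :: 'f set) = 2\<close>]
  ultimately show "A b t = A b' t'" by (metis (no_types))
qed

end
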